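(* Let $(\beta(n))_{n\in\mathbb{N}}$ be a non-increasing sequence of positive real numbers converging to $0$. Let $\tau_v(f)=\sum_{n=1}^\infty 2^{-n}f(1/2^{n-1})$ on $C(\overline{\mathbb{N}})$, let $E_m:C(\overline{\mathbb{N}})\to\mathcal{C}_m$ be the unique $\tau_v$-preserving conditional expectation onto $\mathcal{C}_m$, and define $L_\beta(f)=\sup\{\|f-E_m(f)\|_\infty/\beta(m): m\in\mathbb{N}\}$. Then $L_\beta(\varphi_n)=1/\beta(n)$ for all $n\in\mathbb{N}$.
   Context: $\mathbb{N}=\{1,2,\dots\}$, $\overline{\mathbb{N}}=\{1/2^{n-1}: n\in\mathbb{N}\}\cup\{0\}\subseteq\mathbb{R}$, and $\|\cdot\|_\infty$ is the sup norm on $C(\overline{\mathbb{N}})$. For $m\in\mathbb{N}$, $\mathcal{C}_m=\{f\in C(\overline{\mathbb{N}}): f(x)=f(1/2^{m-1})\text{ for all } x\le 1/2^{m-1}\}$, a finite-dimensional C*-subalgebra with $\mathcal{C}_1=\mathbb{C}1$; the $\mathcal{C}_m$ increase and their union is dense. A conditional expectation onto a unital C*-subalgebra $B$ is a linear map $E$ onto $B$ with $E|_B=\mathrm{id}$, $\|E(a)\|\le\|a\|$ and $E(bab')=bE(a)b'$ for $b,b'\in B$; $\tau_v$-preserving means $\tau_v\circ E=\tau_v$. For $n\in\mathbb{N}_0$, $\varphi_n:\overline{\mathbb{N}}\to\mathbb{R}$ is defined by $\varphi_n(x)=0$ if $x>1/2^{n-1}$, $\varphi_n(x)=-1$ if $x=1/2^{n-1}$,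 and $\varphi_n(x)=1$ if $x<1/2^{n-1}$. *)

theory Defs
  imports "HOL-Analysis.Analysis" "HOL-Library.FuncSet"
begin

definition Nbar :: "real set" where
  "Nbar = insert 0 ((\<lambda>k::nat. (1/2::real) ^ k) ` UNIV)"

text \<open>C(Nbar): complex continuous functions on Nbar, normalised to be 0 outside Nbar
  (so that each element of C(Nbar) has exactly one representative).\<close>
definition CN :: "(real \<Rightarrow> complex) set" where
  "CN = {f. continuous_on Nbar f \<and> (\<forall>x. x \<notin> Nbar \<longrightarrow> f x = 0)}"

definition supnorm :: "(real \<Rightarrow> complex) \<Rightarrow> real" where
  "supnorm f = (SUP x\<in>Nbar. cmod (f x))"

definition pt :: "nat \<Rightarrow> real" where
  "pt m = 2 powr (1 - real m)"

definition Cm :: "nat \<Rightarrow> (real \<Rightarrow> complex) set" where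
  "Cm m = {f \<in> CN. \<forall>x\<in>Nbar. x \<le> pt m \<longrightarrow> f x = f (pt m)}"

definition tau_v :: "(real \<Rightarrow> complex) \<Rightarrow> complex" where
  "tau_v f = (\<Sum>n. complex_of_real ((1/2) ^ (Suc n)) * f (pt (Suc n)))"

definition cond_exp :: "(real \<Rightarrow> complex) set \<Rightarrow> ((real \<Rightarrow> complex) \<Rightarrow> (real \<Rightarrow> complex)) \<Rightarrow> bool" where
  "cond_exp B E \<longleftrightarrow>
     E ` CN = B \<and>
     (\<forall>f\<in>CN. \<forall>g\<in>CN. E (\<lambda>x. f x + g x) = (\<lambda>x. E f x + E g x)) \<and>
     (\<forall>f\<in>CN. \<forall>c. E (\<lambda>x. c * f x) = (\<lambda>x. c * E f x)) \<and>
     (\<forall>b\<in>B. E b = b) \<and>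
     (\<forall>a\<in>CN. supnorm (E a) \<le> supnorm a) \<and>
     (\<forall>b\<in>B. \<forall>b'\<in>B. \<forall>a\<in>CN. E (\<lambda>x. b x * a x * b' x) = (\<lambda>x. b x * E a x * b' x))"

definition tau_preserving :: "((real \<Rightarrow> complex) \<Rightarrow> (real \<Rightarrow> complex)) \<Rightarrow> bool" where
  "tau_preserving E \<longleftrightarrow> (\<forall>f\<in>CN. tau_v (E f) = tau_v f)"

text \<open>E_m: the unique tau_v-preserving conditional expectation onto C_m
  (as a map on C(Nbar), i.e. an extensional function on CN).\<close>
definition Em :: "nat \<Rightarrow> (real \<Rightarrow> complex) \<Rightarrow> (real \<Rightarrow> complex)" where
  "Em m = (THE E. E \<in> CN \<rightarrow>\<^sub>E Cm m \<and> cond_exp (Cm m) E \<and> tau_preserving E)"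

definition L_beta :: "(nat \<Rightarrow> real) \<Rightarrow> (real \<Rightarrow> complex) \<Rightarrow> real" where
  "L_beta \<beta> f = (SUP m\<in>{1..}. supnorm (\<lambda>x. f x - Em m f x) / \<beta> m)"

definition phi :: "nat \<Rightarrow> real \<Rightarrow> complex" where
  "phi n x = (if x \<notin> Nbar then 0
              else if x > pt n then 0
              else if x = pt n then -1 else 1)"

end

theory Submission
  imports Defs
begin

text \<open>
  Let B be the functions on Nbar that are constant on [0, half_pow M]. A conditional expectation
  E onto B fixes f at every isolated point half_pow j with j < M: the point mass d at that point
  lies in B, so d * E f * d = E (d * f * d) = E (f (half_pow j) * d) = f (half_pow j) * d.
  Preservation of tau_v then forces the constant value of E f on [0, half_pow M] to be the tail
  average of f, the sum of 2^-(i+1) * f (half_pow (M + i)) over i, and this explicit map is indeed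
  such an expectation; with M = m - 1 it is E_m. For phi n and M < n the tail average is
  -2^-k + 2^-k = 0 with k = n - M, so E_m (phi n) = 0 for m \<le> n, whereas phi n lies in C_m for
  m > n. The quotients in L_beta are therefore 1 / beta m for m \<le> n and 0 otherwise, and as beta
  is non-increasing their supremum is attained at m = n.
\<close>

definition half_pow :: "nat \<Rightarrow> real" where
  "half_pow j = (1/2) ^ j"

lemma Nbar_eq: "Nbar = insert 0 (range half_pow)"
  by (simp add: Nbar_def half_pow_def[abs_def])

lemma half_pow_pos: "half_pow j > 0"
  by (simp add: half_pow_def)

lemma half_pow_le_iff: "half_pow i \<le> half_pow j \<longleftrightarrow> j \<le> i"
  by (simp add: half_pow_def power_decreasing_iff)

lemma half_pow_less_iff: "half_pow i < half_pow j \<longleftrightarrow> j < i"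
  by (simp add: half_pow_def power_strict_decreasing_iff)

lemma half_pow_eq_iff: "half_pow i = half_pow j \<longleftrightarrow> i = j"
  by (metis half_pow_le_iff order_antisym order_refl)

lemma half_pow_in_Nbar: "half_pow j \<in> Nbar"
  by (simp add: Nbar_eq)

lemma zero_in_Nbar: "0 \<in> Nbar"
  by (simp add: Nbar_eq)

lemma Nbar_cases:
  assumes "x \<in> Nbar" obtains "x = 0" | j where "x = half_pow j"
  using assms unfolding Nbar_eq by auto

lemma Nbar_greater_half_pow:
  assumes "x \<in> Nbar" "half_pow M < x" obtains j where "j < M" "x = half_pow j"
  using assms half_pow_pos[of M] by (cases rule: Nbar_cases) (auto simp: half_pow_less_iff)

lemma pt_eq_half_pow:
  assumes "m \<ge> 1" shows "pt m = half_pow (m - 1)"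
proof -
  have "pt m = 2 powr (- real (m - 1))"
    using assms by (simp add: pt_def of_nat_diff)
  also have "\<dots> = inverse (2 ^ (m - 1))"
    by (simp add: powr_minus powr_realpow)
  finally show ?thesis
    by (simp add: half_pow_def power_divide inverse_eq_divide)
qed

lemma compact_Nbar: "compact Nbar"
proof -
  have "half_pow \<longlonglongrightarrow> 0"
    unfolding half_pow_def[abs_def] by (rule LIMSEQ_realpow_zero) auto
  then show ?thesis
    unfolding Nbar_eq by (rule compact_sequence_with_limit)
qed

lemma continuous_on_Nbar_if_const_below:
  assumes const: "\<And>x. x \<in> Nbar \<Longrightarrow> x \<le> half_pow M \<Longrightarrow> g x = g (half_pow M)"
  shows "continuous_on Nbar g"
proof -
  let ?A = "Nbar \<inter> {..half_pow M}" and ?B = "Nbar \<inter> {half_pow M <..}"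
  have "?B \<subseteq> half_pow ` {..<M}"
    by (auto elim: Nbar_greater_half_pow)
  then have "finite ?B"
    by (rule finite_subset) simp
  then have "closed ?B" "continuous_on ?B g"
    by (simp_all add: finite_imp_closed continuous_on_finite)
  moreover have "closed ?A"
    using compact_Nbar by (intro closed_Int compact_imp_closed closed_atMost)
  moreover have "continuous_on ?A g"
    by (rule continuous_on_eq[OF continuous_on_const]) (use const in auto)
  ultimately have "continuous_on (?A \<union> ?B) g"
    by (intro continuous_on_closed_Un)
  moreover have "?A \<union> ?B = Nbar"
    by auto
  ultimately show ?thesis
    by simp
qed

lemma norm_le_supnorm:
  assumes "f \<in> CN" "x \<in> Nbar" shows "cmod (f x) \<le> supnorm f"
proof -
  have "continuous_on Nbar (\<lambda>x. cmod (f x))"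
    using assms(1) unfolding CN_def by (auto intro: continuous_on_norm)
  then have "bounded ((\<lambda>x. cmod (f x)) ` Nbar)"
    using compact_Nbar by (intro compact_imp_bounded compact_continuous_image)
  then show ?thesis
    unfolding supnorm_def using assms(2) by (intro cSUP_upper bounded_imp_bdd_above)
qed

lemma supnorm_le:
  assumes "\<And>x. x \<in> Nbar \<Longrightarrow> cmod (f x) \<le> S" shows "supnorm f \<le> S"
  unfolding supnorm_def using assms zero_in_Nbar by (intro cSUP_least) auto

lemma supnorm_zero: "supnorm (\<lambda>x. 0) = 0"
proof -
  have "Nbar \<noteq> {}"
    using zero_in_Nbar by blast
  then show ?thesis
    unfolding supnorm_def by (simp add: cSUP_const)
qed

lemma cond_exp_range: "cond_exp B E \<Longrightarrow> E ` CN = B"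
  unfolding cond_exp_def by (elim conjE)

lemma cond_exp_idem: "cond_exp B E \<Longrightarrow> b \<in> B \<Longrightarrow> E b = b"
  unfolding cond_exp_def by (elim conjE) blast

lemma cond_exp_bimodule:
  "cond_exp B E \<Longrightarrow> b \<in> B \<Longrightarrow> b' \<in> B \<Longrightarrow> a \<in> CN \<Longrightarrow>
    E (\<lambda>x. b x * a x * b' x) = (\<lambda>x. b x * E a x * b' x)"
  unfolding cond_exp_def by (elim conjE) blast

definition weight :: "nat \<Rightarrow> complex" where
  "weight i = of_real ((1/2) ^ Suc i)"

lemma weight_add: "weight (i + k) = of_real ((1/2) ^ k) * weight i"
  by (simp add: weight_def power_add)

lemma weight_sums: "weight sums 1"
  unfolding weight_def[abs_def] using sums_of_real[OF power_half_series] by (simp only: of_real_1)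

lemma suminf_weight_mult: "(\<Sum>i. weight i * c) = c"
  using sums_unique[OF sums_mult2[OF weight_sums, of c]] by simp

lemma
  assumes "\<And>i. cmod (g i) \<le> S"
  shows summable_weight_mult: "summable (\<lambda>i. weight i * g i)"
    and norm_suminf_weight_mult_le: "cmod (\<Sum>i. weight i * g i) \<le> S"
proof -
  have bound: "norm (weight i * g i) \<le> (1/2) ^ Suc i * S" for i
    unfolding norm_mult weight_def norm_of_real using assms[of i] by (simp add: mult_left_mono)
  have geom: "(\<lambda>i. (1/2::real) ^ Suc i * S) sums S"
    using sums_mult2[OF power_half_series] by simp
  have norms: "summable (\<lambda>i. norm (weight i * g i))"
    using bound by (intro summable_comparison_test'[OF sums_summable[OF geom]]) auto
  have "(\<Sum>i. norm (weight i * g i)) \<le> S"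
    using suminf_le[OF bound norms sums_summable[OF geom]] sums_unique[OF geom] by simp
  with norms show "summable (\<lambda>i. weight i * g i)" "cmod (\<Sum>i. weight i * g i) \<le> S"
    by (auto intro: summable_norm_cancel order_trans[OF summable_norm])
qed

definition const_tail :: "nat \<Rightarrow> (real \<Rightarrow> complex) set" where
  "const_tail M = {g. (\<forall>x. x \<notin> Nbar \<longrightarrow> g x = 0) \<and>
     (\<forall>x\<in>Nbar. x \<le> half_pow M \<longrightarrow> g x = g (half_pow M))}"

lemma const_tail_outside: "b \<in> const_tail M \<Longrightarrow> x \<notin> Nbar \<Longrightarrow> b x = 0"
  unfolding const_tail_def by blast

lemma const_tail_below: "b \<in> const_tail M \<Longrightarrow> x \<in> Nbar \<Longrightarrow> x \<le> half_pow M \<Longrightarrow> b x = b (half_pow M)"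
  unfolding const_tail_def by blast

lemma const_tail_half_pow: "b \<in> const_tail M \<Longrightarrow> M \<le> j \<Longrightarrow> b (half_pow j) = b (half_pow M)"
  by (rule const_tail_below) (simp_all add: half_pow_in_Nbar half_pow_le_iff)

lemma const_tail_subset_CN: "const_tail M \<subseteq> CN"
proof
  fix g assume g: "g \<in> const_tail M"
  then have "continuous_on Nbar g"
    by (intro continuous_on_Nbar_if_const_below const_tail_below)
  with g show "g \<in> CN"
    unfolding CN_def using const_tail_outside by blast
qed

lemma Cm_eq_const_tail: "m \<ge> 1 \<Longrightarrow> Cm m = const_tail (m - 1)"
  using const_tail_subset_CN unfolding Cm_def pt_eq_half_pow
  by (auto simp: const_tail_def CN_def subset_iff)

lemma point_mass_in_const_tail:
  assumes "j < M" shows "(\<lambda>x. if x = half_pow j then c else 0) \<in> const_tail M"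
  using assms half_pow_in_Nbar by (auto simp: const_tail_def half_pow_le_iff half_pow_eq_iff)

lemma CN_add: "f \<in> CN \<Longrightarrow> g \<in> CN \<Longrightarrow> (\<lambda>x. f x + g x) \<in> CN"
  by (simp add: CN_def continuous_on_add)

lemma CN_cmult: "f \<in> CN \<Longrightarrow> (\<lambda>x. c * f x) \<in> CN"
  by (simp add: CN_def continuous_on_mult continuous_on_const)

lemma CN_mult: "f \<in> CN \<Longrightarrow> g \<in> CN \<Longrightarrow> (\<lambda>x. f x * g x) \<in> CN"
  by (simp add: CN_def continuous_on_mult)

definition tail_avg :: "nat \<Rightarrow> (real \<Rightarrow> complex) \<Rightarrow> complex" where
  "tail_avg M f = (\<Sum>i. weight i * f (half_pow (M + i)))"

lemma tau_v_eq_tail_avg: "tau_v f = tail_avg 0 f"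
proof -
  have "pt (Suc n) = half_pow n" for n
    using pt_eq_half_pow[of "Suc n"] by simp
  then show ?thesis
    by (simp add: tau_v_def tail_avg_def weight_def)
qed

lemma summable_tail_avg: "f \<in> CN \<Longrightarrow> summable (\<lambda>i. weight i * f (half_pow (M + i)))"
  by (rule summable_weight_mult[where S = "supnorm f"]) (simp add: norm_le_supnorm half_pow_in_Nbar)

lemma norm_tail_avg_le: "f \<in> CN \<Longrightarrow> cmod (tail_avg M f) \<le> supnorm f"
  unfolding tail_avg_def
  by (rule norm_suminf_weight_mult_le[where S = "supnorm f"]) (simp add: norm_le_supnorm half_pow_in_Nbar)

lemma tail_avg_split:
  assumes "f \<in> CN"
  shows "tail_avg M f =
    (\<Sum>i<k. weight i * f (half_pow (M + i))) + of_real ((1/2) ^ k) * tail_avg (M + k) f"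
proof -
  have "tail_avg M f = (\<Sum>i. weight (i + k) * f (half_pow (M + (i + k)))) +
      (\<Sum>i<k. weight i * f (half_pow (M + i)))"
    unfolding tail_avg_def by (rule suminf_split_initial_segment[OF summable_tail_avg[OF assms]])
  also have "(\<Sum>i. weight (i + k) * f (half_pow (M + (i + k)))) =
      (\<Sum>i. of_real ((1/2) ^ k) * (weight i * f (half_pow (M + k + i))))"
    by (simp add: weight_add ac_simps)
  also have "\<dots> = of_real ((1/2) ^ k) * tail_avg (M + k) f"
    unfolding tail_avg_def by (rule suminf_mult[OF summable_tail_avg[OF assms]])
  finally show ?thesis
    by simp
qed

lemma tau_v_eq_iff_tail_avg_eq:
  assumes "f \<in> CN" "g \<in> CN" and head: "\<And>j. j < M \<Longrightarrow> f (half_pow j) = g (half_pow j)"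
  shows "tau_v f = tau_v g \<longleftrightarrow> tail_avg M f = tail_avg M g"
proof -
  have "(\<Sum>j<M. weight j * f (half_pow j)) = (\<Sum>j<M. weight j * g (half_pow j))"
    using head by simp
  then show ?thesis
    unfolding tau_v_eq_tail_avg tail_avg_split[OF assms(1), of 0 M] tail_avg_split[OF assms(2), of 0 M]
    by simp
qed

lemma tail_avg_add:
  "f \<in> CN \<Longrightarrow> g \<in> CN \<Longrightarrow> tail_avg M (\<lambda>x. f x + g x) = tail_avg M f + tail_avg M g"
  unfolding tail_avg_def using suminf_add[OF summable_tail_avg[of f M] summable_tail_avg[of g M]]
  by (simp add: distrib_left)

lemma tail_avg_cmult: "f \<in> CN \<Longrightarrow> tail_avg M (\<lambda>x. c * f x) = c * tail_avg M f"
  unfolding tail_avg_def using suminf_mult[OF summable_tail_avg[of f M], of c]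
  by (simp add: mult_ac)

lemma const_tail_shift: "b \<in> const_tail M \<Longrightarrow> b (half_pow (M + i)) = b (half_pow M)"
  by (rule const_tail_half_pow) simp_all

lemma tail_avg_const_tail: "b \<in> const_tail M \<Longrightarrow> tail_avg M b = b (half_pow M)"
  unfolding tail_avg_def by (simp only: const_tail_shift suminf_weight_mult)

lemma tail_avg_mult_const_tail:
  assumes "b \<in> const_tail M" "b' \<in> const_tail M" "a \<in> CN"
  shows "tail_avg M (\<lambda>x. b x * a x * b' x) = b (half_pow M) * tail_avg M a * b' (half_pow M)"
proof -
  have "tail_avg M (\<lambda>x. b x * a x * b' x) = tail_avg M (\<lambda>x. (b (half_pow M) * b' (half_pow M)) * a x)"
    unfolding tail_avg_def const_tail_shift[OF assms(1)] const_tail_shift[OF assms(2)]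
    by (simp add: mult_ac)
  also have "\<dots> = b (half_pow M) * b' (half_pow M) * tail_avg M a"
    by (rule tail_avg_cmult[OF assms(3)])
  finally show ?thesis
    by (simp add: mult_ac)
qed

lemma const_tail_eqI:
  assumes "b \<in> const_tail M" "b' \<in> const_tail M"
    and head: "\<And>j. j < M \<Longrightarrow> b (half_pow j) = b' (half_pow j)"
    and "b (half_pow M) = b' (half_pow M)"
  shows "b = b'"
proof
  fix x
  consider "x \<notin> Nbar" | "x \<in> Nbar" "x \<le> half_pow M" | j where "j < M" "x = half_pow j"
    by (metis Nbar_greater_half_pow not_le)
  then show "b x = b' x"
  proof cases
    case 1
    then show ?thesis
      using assms(1,2) by (simp add: const_tail_outside)
  next
    case 2
    then show ?thesis
      using assms(1,2,4) by (metis const_tail_below)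
  next
    case 3
    then show ?thesis
      using head by simp
  qed
qed

text \<open>The value \<open>undefined\<close> off \<open>CN\<close> makes \<open>tail_exp M\<close> extensional, as required in \<open>Em\<close>.\<close>
definition tail_exp :: "nat \<Rightarrow> (real \<Rightarrow> complex) \<Rightarrow> real \<Rightarrow> complex" where
  "tail_exp M f = (if f \<in> CN
     then (\<lambda>x. if x \<notin> Nbar then 0 else if x \<le> half_pow M then tail_avg M f else f x)
     else undefined)"

lemma tail_exp_apply:
  "f \<in> CN \<Longrightarrow>
    tail_exp M f x = (if x \<notin> Nbar then 0 else if x \<le> half_pow M then tail_avg M f else f x)"
  by (simp add: tail_exp_def)

lemma tail_exp_head: "f \<in> CN \<Longrightarrow> j < M \<Longrightarrow> tail_exp M f (half_pow j) = f (half_pow j)"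
  by (simp add: tail_exp_apply half_pow_in_Nbar half_pow_le_iff)

lemma tail_exp_at_half_pow: "f \<in> CN \<Longrightarrow> tail_exp M f (half_pow M) = tail_avg M f"
  by (simp add: tail_exp_apply half_pow_in_Nbar)

lemma tail_exp_in_const_tail: "f \<in> CN \<Longrightarrow> tail_exp M f \<in> const_tail M"
  by (simp add: const_tail_def tail_exp_apply half_pow_in_Nbar)

lemma tail_exp_const_tail:
  assumes "b \<in> const_tail M" shows "tail_exp M b = b"
proof -
  have b: "b \<in> CN"
    using assms const_tail_subset_CN by blast
  show ?thesis
  proof (rule const_tail_eqI[OF tail_exp_in_const_tail[OF b] assms])
    show "tail_exp M b (half_pow j) = b (half_pow j)" if "j < M" for j
      using b that by (rule tail_exp_head)
    show "tail_exp M b (half_pow M) = b (half_pow M)"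
      using assms b by (simp add: tail_exp_at_half_pow tail_avg_const_tail)
  qed
qed

lemma tail_exp_add:
  "f \<in> CN \<Longrightarrow> g \<in> CN \<Longrightarrow> tail_exp M (\<lambda>x. f x + g x) = (\<lambda>x. tail_exp M f x + tail_exp M g x)"
  by (simp add: tail_exp_apply CN_add tail_avg_add fun_eq_iff)

lemma tail_exp_cmult: "f \<in> CN \<Longrightarrow> tail_exp M (\<lambda>x. c * f x) = (\<lambda>x. c * tail_exp M f x)"
  by (simp add: tail_exp_apply CN_cmult tail_avg_cmult fun_eq_iff)

lemma tail_exp_bimodule:
  assumes b: "b \<in> const_tail M" and b': "b' \<in> const_tail M" and a: "a \<in> CN"
  shows "tail_exp M (\<lambda>x. b x * a x * b' x) = (\<lambda>x. b x * tail_exp M a x * b' x)"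
proof
  fix x
  have "(\<lambda>x. b x * a x * b' x) \<in> CN"
    using b b' a const_tail_subset_CN by (intro CN_mult) auto
  moreover have "b x = b (half_pow M)" "b' x = b' (half_pow M)" if "x \<in> Nbar" "x \<le> half_pow M"
    using that b b' by (simp_all add: const_tail_below)
  ultimately show "tail_exp M (\<lambda>x. b x * a x * b' x) x = b x * tail_exp M a x * b' x"
    using a by (simp add: tail_exp_apply tail_avg_mult_const_tail[OF b b' a])
qed

lemma supnorm_tail_exp_le: "f \<in> CN \<Longrightarrow> supnorm (tail_exp M f) \<le> supnorm f"
  by (intro supnorm_le) (simp add: tail_exp_apply norm_tail_avg_le norm_le_supnorm)

lemma tau_v_tail_exp: "f \<in> CN \<Longrightarrow> tau_v (tail_exp M f) = tau_v f"
  using const_tail_subset_CN tail_exp_in_const_tail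
  by (subst tau_v_eq_iff_tail_avg_eq[where M = M])
    (auto simp: tail_exp_head tail_avg_const_tail tail_exp_at_half_pow)

lemma tail_exp_is_cond_exp:
  "tail_exp M \<in> CN \<rightarrow>\<^sub>E const_tail M \<and> cond_exp (const_tail M) (tail_exp M) \<and>
    tau_preserving (tail_exp M)"
proof (intro conjI)
  show "tail_exp M \<in> CN \<rightarrow>\<^sub>E const_tail M"
    by (auto simp: PiE_iff extensional_def tail_exp_in_const_tail) (simp add: tail_exp_def)
  have "const_tail M \<subseteq> tail_exp M ` CN"
    using tail_exp_const_tail const_tail_subset_CN by (metis image_eqI subsetD subsetI)
  then have "tail_exp M ` CN = const_tail M"
    using tail_exp_in_const_tail by blast
  then show "cond_exp (const_tail M) (tail_exp M)"
    unfolding cond_exp_def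
    by (simp add: tail_exp_add tail_exp_cmult tail_exp_const_tail supnorm_tail_exp_le
        tail_exp_bimodule)
  show "tau_preserving (tail_exp M)"
    by (simp add: tau_preserving_def tau_v_tail_exp)
qed

lemma cond_exp_const_tail_head:
  assumes E: "cond_exp (const_tail M) E" and f: "f \<in> CN" and j: "j < M"
  shows "E f (half_pow j) = f (half_pow j)"
proof -
  define \<delta> :: "complex \<Rightarrow> real \<Rightarrow> complex" where "\<delta> c x = (if x = half_pow j then c else 0)" for c x
  have \<delta>: "\<delta> c \<in> const_tail M" for c
    unfolding \<delta>_def[abs_def] using j by (rule point_mass_in_const_tail)
  have "(\<lambda>x. \<delta> 1 x * E f x * \<delta> 1 x) = E (\<lambda>x. \<delta> 1 x * f x * \<delta> 1 x)"
    using cond_exp_bimodule[OF E \<delta> \<delta> f] by simp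
  also have "(\<lambda>x. \<delta> 1 x * f x * \<delta> 1 x) = \<delta> (f (half_pow j))"
    by (auto simp: \<delta>_def)
  also have "E \<dots> = \<delta> (f (half_pow j))"
    using cond_exp_idem[OF E \<delta>] .
  finally show ?thesis
    by (metis \<delta>_def mult_1 mult_1_right)
qed

lemma cond_exp_const_tail_at_half_pow:
  assumes E: "cond_exp (const_tail M) E" "tau_preserving E" and f: "f \<in> CN"
  shows "E f (half_pow M) = tail_avg M f"
proof -
  have Ef: "E f \<in> const_tail M"
    using cond_exp_range[OF E(1)] f by blast
  then have "E f \<in> CN"
    using const_tail_subset_CN by blast
  moreover have "tau_v (E f) = tau_v f"
    using E(2) f unfolding tau_preserving_def by blast
  ultimately have "tail_avg M (E f) = tail_avg M f"
    using f cond_exp_const_tail_head[OF E(1) f] tau_v_eq_iff_tail_avg_eq by blast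
  then show ?thesis
    using tail_avg_const_tail[OF Ef] by simp
qed

lemma cond_exp_const_tail_unique:
  assumes "E \<in> CN \<rightarrow>\<^sub>E const_tail M" "cond_exp (const_tail M) E" "tau_preserving E"
  shows "E = tail_exp M"
proof
  fix f
  show "E f = tail_exp M f"
  proof (cases "f \<in> CN")
    case False
    have "E f = undefined"
      using assms(1) False by (rule PiE_arb)
    with False show ?thesis
      by (simp add: tail_exp_def)
  next
    case f: True
    show ?thesis
    proof (rule const_tail_eqI)
      show "E f \<in> const_tail M"
        using assms(1) f by (rule PiE_mem)
      show "tail_exp M f \<in> const_tail M"
        using f by (rule tail_exp_in_const_tail)
      show "E f (half_pow j) = tail_exp M f (half_pow j)" if "j < M" for j
        using cond_exp_const_tail_head[OF assms(2) f that] tail_exp_head[OF f that] by simp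
      show "E f (half_pow M) = tail_exp M f (half_pow M)"
        using cond_exp_const_tail_at_half_pow[OF assms(2,3) f] tail_exp_at_half_pow[OF f] by simp
    qed
  qed
qed

lemma Em_eq_tail_exp: "m \<ge> 1 \<Longrightarrow> Em m = tail_exp (m - 1)"
  unfolding Em_def Cm_eq_const_tail
  using tail_exp_is_cond_exp cond_exp_const_tail_unique by (intro the_equality) blast+

lemma phi_0: "n \<ge> 1 \<Longrightarrow> phi n 0 = 1"
  using half_pow_pos[of "n - 1"] by (simp add: phi_def zero_in_Nbar pt_eq_half_pow)

lemma phi_half_pow:
  "n \<ge> 1 \<Longrightarrow> phi n (half_pow j) = (if j < n - 1 then 0 else if j = n - 1 then -1 else 1)"
  by (simp add: phi_def half_pow_in_Nbar pt_eq_half_pow half_pow_less_iff half_pow_eq_iff)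

lemma phi_in_const_tail:
  assumes n: "n \<ge> 1" and "n \<le> K" shows "phi n \<in> const_tail K"
proof -
  have "phi n x = 1" if "x \<in> Nbar" "x \<le> half_pow K" for x
    using that(1)
  proof (cases rule: Nbar_cases)
    case 1
    then show ?thesis
      using n by (simp add: phi_0)
  next
    case (2 j)
    then show ?thesis
      using that(2) n \<open>n \<le> K\<close> by (auto simp: phi_half_pow half_pow_le_iff)
  qed
  then show ?thesis
    unfolding const_tail_def using half_pow_in_Nbar by (simp add: phi_def)
qed

lemma phi_in_CN: "n \<ge> 1 \<Longrightarrow> phi n \<in> CN"
  using phi_in_const_tail const_tail_subset_CN by blast

lemma supnorm_phi: assumes n: "n \<ge> 1" shows "supnorm (phi n) = 1"
proof (rule antisym)
  show "supnorm (phi n) \<le> 1"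
    by (rule supnorm_le) (simp add: phi_def)
  show "1 \<le> supnorm (phi n)"
    using norm_le_supnorm[OF phi_in_CN[OF n] zero_in_Nbar] phi_0[OF n] by simp
qed

lemma tail_avg_phi:
  assumes n: "n \<ge> 1" and "M < n" shows "tail_avg M (phi n) = 0"
proof -
  obtain D where D: "n = M + Suc D"
    using \<open>M < n\<close> less_iff_Suc_add by auto
  have "(\<Sum>i<Suc D. weight i * phi n (half_pow (M + i))) = - weight D"
    using n by (simp add: D phi_half_pow)
  moreover have "tail_avg n (phi n) = 1"
    using n tail_avg_const_tail[OF phi_in_const_tail[OF n order_refl]]
    by (auto simp: phi_half_pow)
  ultimately show ?thesis
    using tail_avg_split[OF phi_in_CN[OF n], of M "Suc D"] by (simp add: D weight_def)
qed

lemma tail_exp_phi: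
  assumes n: "n \<ge> 1" and "M < n" shows "tail_exp M (phi n) = (\<lambda>x. 0)"
proof
  fix x
  show "tail_exp M (phi n) x = 0"
  proof (cases "x \<in> Nbar \<and> half_pow M < x")
    case True
    then obtain j where "j < M" "x = half_pow j"
      using Nbar_greater_half_pow by blast
    then show ?thesis
      using n \<open>M < n\<close> by (simp add: tail_exp_head phi_in_CN phi_half_pow)
  next
    case False
    then show ?thesis
      using n \<open>M < n\<close> by (auto simp: tail_exp_apply phi_in_CN tail_avg_phi)
  qed
qed

lemma supnorm_phi_minus_Em:
  assumes n: "n \<ge> 1" and m: "m \<ge> 1"
  shows "supnorm (\<lambda>x. phi n x - Em m (phi n) x) = (if m \<le> n then 1 else 0)"
proof (cases "m \<le> n")
  case True
  then have "Em m (phi n) = (\<lambda>x. 0)"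
    using n m by (simp add: Em_eq_tail_exp tail_exp_phi)
  then show ?thesis
    using True by (simp add: supnorm_phi[OF n])
next
  case False
  then have "Em m (phi n) = phi n"
    using n m by (simp add: Em_eq_tail_exp tail_exp_const_tail phi_in_const_tail)
  then show ?thesis
    using False by (simp add: supnorm_zero)
qed

theorem lemma3p8:
  fixes \<beta> :: "nat \<Rightarrow> real" and n :: nat
  assumes pos: "\<And>k. k \<ge> 1 \<Longrightarrow> \<beta> k > 0"
    and noninc: "\<And>k l. 1 \<le> k \<Longrightarrow> k \<le> l \<Longrightarrow> \<beta> l \<le> \<beta> k"
    and lim: "\<beta> \<longlonglongrightarrow> 0"
    and n: "n \<ge> 1"
  shows "L_beta \<beta> (phi n) = 1 / \<beta> n"
  unfolding L_beta_def
proof (rule cSup_eq_maximum)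
  show "1 / \<beta> n \<in> (\<lambda>m. supnorm (\<lambda>x. phi n x - Em m (phi n) x) / \<beta> m) ` {1..}"
    using n by (intro image_eqI[of _ _ n]) (simp_all add: supnorm_phi_minus_Em)
next
  fix y assume "y \<in> (\<lambda>m. supnorm (\<lambda>x. phi n x - Em m (phi n) x) / \<beta> m) ` {1..}"
  then obtain m where m: "m \<ge> 1" and y: "y = (if m \<le> n then 1 / \<beta> m else 0)"
    using n by (auto simp: supnorm_phi_minus_Em)
  have "1 / \<beta> m \<le> 1 / \<beta> n" if "m \<le> n"
    using noninc[OF m that] pos[OF n] by (intro divide_left_mono) auto
  then show "y \<le> 1 / \<beta> n"
    using pos[OF n] by (simp add: y)
qed

end
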